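(* Let $p\in\mathcal{X}$. If $q_1,q_2\in\mathcal{X}$ are two pathless polynomials with $p\equiv q_1\pmod{\mathcal{J}}$ and $p\equiv q_2\pmod{\mathcal{J}}$, then $D(q_1)=D(q_2)$. In other words, for pathless $q$ with $p\equiv q\pmod{\mathcal J}$, the value $D(q)$ depends only on $\alpha$, $\beta$ and $p$, not on the choice of $q$.
   Context: Let $\mathbf{k}$ be a commutative ring, let $\beta,\alpha\in\mathbf{k}$, and let $n$ be a positive integer; write $[m]=\{1,2,\dots,m\}$. Let $\mathcal{X}=\mathbf{k}[x_{i,j}\mid 1\le i<j\le n]$ be the polynomial ring over $\mathbf{k}$ in the $n(n-1)/2$ indeterminates $x_{i,j}$, and let $\mathfrak{M}$ be the set of monomials (without coefficients) in these indeterminates. Let $\mathcal{J}$ be the ideal of $\mathcal{X}$ generated by all elements $x_{i,j}x_{j,k}-x_{i,k}(x_{i,j}+x_{j,k}+\beta)-\alpha$ for $1\le i<j<k\le n$. A monomial $\mathfrak{m}\in\mathfrak{M}$ is pathless if there is no triple $(i,j,k)$ with $1\le i<j<k\le n$ and $x_{i,j}x_{j,k}\mid\mathfrak{m}$. A polynomial in $\mathcal{X}$ is pathless if it is a $\mathbf{k}$-linear combination of pathless monomials. Let $\mathcal{T}'=\mathbf{k}[t_1,\dots,t_{n-1}]$ and let $D:\mathcal{X}\to\mathcal{T}'$ be the $\mathbf{k}$-algebra homomorphism with $D(x_{i,j})=t_i$ for all $1\le i<j\le n$. *)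

theory Defs
  imports "HOL-Library.Poly_Mapping"
begin

text \<open>Multivariate polynomials are represented in the standard way via Poly_Mapping:
  a monomial in the indeterminates x_{i,j} (indexed by pairs (i,j)) is a finitely supported
  exponent map from pairs to nat; a polynomial is a finitely supported map from
  monomials to coefficients.  Similarly for T' = k[t_1,...,t_{n-1}] with variables indexed by nat.\<close>

type_synonym monoX = "(nat \<times> nat) \<Rightarrow>\<^sub>0 nat"
type_synonym 'a polyX = "monoX \<Rightarrow>\<^sub>0 'a"
type_synonym 'a polyT = "(nat \<Rightarrow>\<^sub>0 nat) \<Rightarrow>\<^sub>0 'a"

definition varsX :: "nat \<Rightarrow> (nat \<times> nat) set" where
  "varsX n = {(i, j). 1 \<le> i \<and> i < j \<and> j \<le> n}"

definition inX :: "nat \<Rightarrow> 'a::comm_ring_1 polyX \<Rightarrow> bool" where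
  "inX n (p :: 'a polyX) \<longleftrightarrow> (\<forall>m \<in> Poly_Mapping.keys p. Poly_Mapping.keys (m :: monoX) \<subseteq> varsX n)"

definition xvar :: "nat \<Rightarrow> nat \<Rightarrow> 'a::comm_ring_1 polyX" where
  "xvar i j = Poly_Mapping.single (Poly_Mapping.single (i, j) 1) 1"

definition constX :: "'a::comm_ring_1 \<Rightarrow> 'a polyX" where
  "constX c = Poly_Mapping.single 0 c"

definition triples :: "nat \<Rightarrow> (nat \<times> nat \<times> nat) set" where
  "triples n = {(i, j, k). 1 \<le> i \<and> i < j \<and> j < k \<and> k \<le> n}"

definition genJ :: "'a::comm_ring_1 \<Rightarrow> 'a \<Rightarrow> nat \<times> nat \<times> nat \<Rightarrow> 'a polyX" where
  "genJ \<beta> \<alpha> t = (case t of (i, j, k) \<Rightarrow>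
     xvar i j * xvar j k - xvar i k * (xvar i j + xvar j k + constX \<beta>) - constX \<alpha>)"

definition idealJ :: "nat \<Rightarrow> 'a::comm_ring_1 \<Rightarrow> 'a \<Rightarrow> 'a polyX set" where
  "idealJ n \<beta> \<alpha> = {(\<Sum>t \<in> triples n. c t * genJ \<beta> \<alpha> t) | c. \<forall>t \<in> triples n. inX n (c t)}"

definition pathless_mono :: "nat \<Rightarrow> monoX \<Rightarrow> bool" where
  "pathless_mono n m \<longleftrightarrow>
     \<not> (\<exists>i j k. 1 \<le> i \<and> i < j \<and> j < k \<and> k \<le> n \<and>
                 Poly_Mapping.lookup m (i, j) \<ge> 1 \<and> Poly_Mapping.lookup m (j, k) \<ge> 1)"

definition pathless :: "nat \<Rightarrow> 'a::comm_ring_1 polyX \<Rightarrow> bool" where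
  "pathless n (q :: 'a polyX) \<longleftrightarrow> (\<forall>m \<in> Poly_Mapping.keys q. pathless_mono n m)"

definition tvar :: "nat \<Rightarrow> 'a::comm_ring_1 polyT" where
  "tvar i = Poly_Mapping.single (Poly_Mapping.single i 1) 1"

definition D :: "'a::comm_ring_1 polyX \<Rightarrow> 'a polyT" where
  "D q = (\<Sum>m \<in> Poly_Mapping.keys q. Poly_Mapping.single 0 (Poly_Mapping.lookup q m) *
            (\<Prod>v \<in> Poly_Mapping.keys m. tvar (fst v) ^ Poly_Mapping.lookup m v))"

end

theory Submission
  imports Defs
begin

text \<open>
  One constructs a \<open>\<bbbk>\<close>-linear map \<open>L : \<X> \<rightarrow> \<T>'\<close> that vanishes on \<open>\<J>\<close> and agrees with \<open>D\<close>
  on pathless polynomials; then \<open>D q\<^sub>1 = L p = D q\<^sub>2\<close>.  Let \<open>x\<^sub>a\<^sub>b\<close> act on \<open>\<T>'\<close> by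
  \<open>X \<mapsto> t\<^sub>a X + f(t\<^sub>a) \<delta>\<^sub>b\<^sub>a X\<close>, where \<open>f(u) = u\<^sup>2 + \<beta> u + \<alpha>\<close> and \<open>\<delta>\<^sub>b\<^sub>a\<close> is the divided difference
  \<open>(X - X[t\<^sub>b := t\<^sub>a]) / (t\<^sub>b - t\<^sub>a)\<close>.  For a monomial \<open>m\<close>, \<open>L m\<close> is obtained from \<open>1\<close> by
  applying the factors of \<open>m\<close> column by column, first all \<open>x\<^sub>s\<^sub>n\<close>, then all \<open>x\<^sub>s\<^sub>,\<^sub>n\<^sub>-\<^sub>1\<close>, and so on.
  The actions of \<open>x\<^sub>a\<^sub>b\<close> and \<open>x\<^sub>c\<^sub>d\<close> commute unless \<open>b = c\<close> or \<open>a = d\<close>, and a computation with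
  divided differences shows that they satisfy the defining relations of \<open>\<J>\<close>; hence \<open>L\<close>
  kills \<open>\<J>\<close>.  If \<open>m\<close> is pathless and column \<open>l\<close> of \<open>m\<close> is nonempty, then the polynomial built
  from the later columns does not involve \<open>t\<^sub>l\<close>, so the divided differences vanish and each
  \<open>x\<^sub>s\<^sub>l\<close> just multiplies by \<open>t\<^sub>s\<close>, exactly as \<open>D\<close> does.
\<close>

abbreviation "keys \<equiv> Poly_Mapping.keys"
abbreviation "lookup \<equiv> Poly_Mapping.lookup"
abbreviation "single \<equiv> Poly_Mapping.single"

lemma poly_mapping_eq_sum_single:
  fixes P :: "'k \<Rightarrow>\<^sub>0 'b::comm_monoid_add"
  shows "P = (\<Sum>e\<in>keys P. single e (lookup P e))"
proof (rule poly_mapping_eqI)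
  fix x
  show "lookup P x = lookup (\<Sum>e\<in>keys P. single e (lookup P e)) x"
    by (simp add: lookup_sum lookup_single when_def in_keys_iff)
qed

definition map_monomials :: "('k \<Rightarrow> 'k) \<Rightarrow> ('k \<Rightarrow>\<^sub>0 'b::comm_ring_1) \<Rightarrow> ('k \<Rightarrow>\<^sub>0 'b)" where
  "map_monomials \<sigma> P = (\<Sum>e\<in>keys P. single (\<sigma> e) (lookup P e))"

lemma map_monomials_superset:
  assumes "finite K" "keys P \<subseteq> K"
  shows "map_monomials \<sigma> P = (\<Sum>e\<in>K. single (\<sigma> e) (lookup P e))"
  unfolding map_monomials_def
  by (rule sum.mono_neutral_left) (use assms in \<open>auto simp: in_keys_iff\<close>)

lemma map_monomials_add: "map_monomials \<sigma> (P + Q) = map_monomials \<sigma> P + map_monomials \<sigma> Q"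
proof -
  let ?K = "keys P \<union> keys Q"
  have "map_monomials \<sigma> (P + Q) = (\<Sum>e\<in>?K. single (\<sigma> e) (lookup (P + Q) e))"
    by (rule map_monomials_superset) (auto simp: keys_add)
  also have "\<dots> = (\<Sum>e\<in>?K. single (\<sigma> e) (lookup P e)) + (\<Sum>e\<in>?K. single (\<sigma> e) (lookup Q e))"
    by (simp add: lookup_add single_add sum.distrib)
  also have "\<dots> = map_monomials \<sigma> P + map_monomials \<sigma> Q"
    by (subst (1 2) map_monomials_superset[where K = ?K]) auto
  finally show ?thesis .
qed

lemma map_monomials_zero [simp]: "map_monomials \<sigma> 0 = 0"
  by (simp add: map_monomials_def)

lemma map_monomials_single [simp]: "map_monomials \<sigma> (single e c) = single (\<sigma> e) c"
  by (simp add: map_monomials_def)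

lemma map_monomials_sum: "map_monomials \<sigma> (sum F A) = (\<Sum>x\<in>A. map_monomials \<sigma> (F x))"
  by (induction A rule: infinite_finite_induct) (auto simp: map_monomials_add)

lemma map_monomials_uminus: "map_monomials \<sigma> (- P) = - map_monomials \<sigma> P"
  using map_monomials_add[of \<sigma> P "- P"] by (simp add: add_eq_0_iff2)

lemma map_monomials_diff: "map_monomials \<sigma> (P - Q) = map_monomials \<sigma> P - map_monomials \<sigma> Q"
  using map_monomials_add[of \<sigma> P "- Q"] map_monomials_uminus[of \<sigma> Q] by simp

lemma map_monomials_mult:
  fixes \<sigma> :: "'k::comm_monoid_add \<Rightarrow> 'k"
  assumes hom: "\<And>a b. \<sigma> (a + b) = \<sigma> a + \<sigma> b"
  shows "map_monomials \<sigma> (P * Q) = map_monomials \<sigma> P * map_monomials \<sigma> (Q :: 'k \<Rightarrow>\<^sub>0 'b::comm_ring_1)"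
proof -
  have PQ: "P * Q = (\<Sum>a\<in>keys P. \<Sum>b\<in>keys Q. single (a + b) (lookup P a * lookup Q b))"
    by (subst (1) poly_mapping_eq_sum_single, subst (2) poly_mapping_eq_sum_single)
       (simp add: sum_product mult_single)
  have "map_monomials \<sigma> (P * Q)
      = (\<Sum>a\<in>keys P. \<Sum>b\<in>keys Q. single (\<sigma> a + \<sigma> b) (lookup P a * lookup Q b))"
    by (simp add: PQ map_monomials_sum hom)
  also have "\<dots> = map_monomials \<sigma> P * map_monomials \<sigma> Q"
    by (simp add: map_monomials_def sum_product mult_single)
  finally show ?thesis .
qed

lemma map_monomials_map_monomials:
  "map_monomials \<sigma> (map_monomials \<tau> P) = map_monomials (\<sigma> \<circ> \<tau>) P"
  by (simp add: map_monomials_def[of \<tau>] map_monomials_sum) (simp add: map_monomials_def)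

section \<open>The substitution \<open>t\<^sub>j := t\<^sub>i\<close> and divided differences\<close>

definition merge_exp :: "nat \<Rightarrow> nat \<Rightarrow> (nat \<Rightarrow>\<^sub>0 nat) \<Rightarrow> (nat \<Rightarrow>\<^sub>0 nat)" where
  "merge_exp j i e = Poly_Mapping.update j 0 e + single i (lookup e j)"

lemma lookup_merge_exp:
  "lookup (merge_exp j i e) l = (if l = j then 0 else lookup e l) + (if l = i then lookup e j else 0)"
  by (simp add: merge_exp_def lookup_add lookup_update lookup_single when_def)

lemma merge_exp_add: "merge_exp j i (a + b) = merge_exp j i a + merge_exp j i b"
  by (rule poly_mapping_eqI) (simp add: lookup_merge_exp lookup_add)

lemma merge_exp_zero [simp]: "merge_exp j i 0 = 0"
  by (rule poly_mapping_eqI) (simp add: lookup_merge_exp)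

definition tsubst :: "nat \<Rightarrow> nat \<Rightarrow> 'a::comm_ring_1 polyT \<Rightarrow> 'a polyT" where
  "tsubst j i = map_monomials (merge_exp j i)"

definition constT :: "'a::comm_ring_1 \<Rightarrow> 'a polyT" where
  "constT c = single 0 c"

lemma constT_add: "constT (a + b) = constT a + constT b"
  by (simp add: constT_def single_add)

lemma constT_mult: "constT (a * b) = constT a * constT b"
  by (simp add: constT_def mult_single)

lemma constT_0: "constT 0 = 0"
  by (simp add: constT_def)

lemma tsubst_add: "tsubst j i (P + Q) = tsubst j i P + tsubst j i Q"
  by (simp add: tsubst_def map_monomials_add)

lemma tsubst_diff: "tsubst j i (P - Q) = tsubst j i P - tsubst j i Q"
  by (simp add: tsubst_def map_monomials_diff)

lemma tsubst_mult: "tsubst j i (P * Q) = tsubst j i P * tsubst j i Q"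
  by (simp add: tsubst_def map_monomials_mult merge_exp_add)

lemma tsubst_constT: "tsubst j i (constT c) = constT c"
  by (simp add: tsubst_def constT_def)

lemma tsubst_one: "tsubst j i 1 = 1"
  using tsubst_constT[of j i 1] by (simp add: constT_def)

lemma tsubst_power: "tsubst j i (P ^ n) = tsubst j i P ^ n"
  by (induction n) (simp_all add: tsubst_one tsubst_mult)

lemma tsubst_prod: "tsubst j i (prod F A) = (\<Prod>x\<in>A. tsubst j i (F x))"
  by (induction A rule: infinite_finite_induct) (simp_all add: tsubst_one tsubst_mult)

lemma tsubst_tvar: "tsubst j i (tvar l) = (if l = j then tvar i else tvar l)"
proof -
  have "merge_exp j i (single l 1) = (if l = j then single i 1 else single l 1)"
    by (rule poly_mapping_eqI) (simp add: lookup_merge_exp lookup_single when_def)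
  then show ?thesis by (simp add: tsubst_def tvar_def)
qed

lemma tsubst_tvar_same [simp]: "tsubst j i (tvar j) = tvar i"
  by (simp add: tsubst_tvar)

lemma tsubst_tvar_other [simp]: "l \<noteq> j \<Longrightarrow> tsubst j i (tvar l) = tvar l"
  by (simp add: tsubst_tvar)

lemma tsubst_tsubst_absorb: "c \<noteq> d \<Longrightarrow> tsubst c b (tsubst c d P) = tsubst c d P"
  unfolding tsubst_def map_monomials_map_monomials
  by (rule arg_cong[where f = "\<lambda>\<sigma>. map_monomials \<sigma> P"])
     (auto intro!: poly_mapping_eqI simp: lookup_merge_exp)

lemma tsubst_commute:
  "b \<noteq> d \<Longrightarrow> a \<noteq> d \<Longrightarrow> c \<noteq> b \<Longrightarrow> tsubst b a (tsubst d c P) = tsubst d c (tsubst b a P)"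
  unfolding tsubst_def map_monomials_map_monomials
  by (rule arg_cong[where f = "\<lambda>\<sigma>. map_monomials \<sigma> P"])
     (auto intro!: poly_mapping_eqI simp: lookup_merge_exp)

lemma tvar_power: "(tvar l :: 'a::comm_ring_1 polyT) ^ b = single (single l b) 1"
  by (induction b) (simp_all add: tvar_def mult_single flip: single_add)

definition power_diff_quot :: "nat \<Rightarrow> nat \<Rightarrow> nat \<Rightarrow> 'a::comm_ring_1 polyT" where
  "power_diff_quot j i b = (\<Sum>l<b. tvar i ^ (b - Suc l) * tvar j ^ l)"

definition divdiff :: "nat \<Rightarrow> nat \<Rightarrow> 'a::comm_ring_1 polyT \<Rightarrow> 'a polyT" where
  "divdiff j i P = (\<Sum>e\<in>keys P.
     single (Poly_Mapping.update j 0 e) (lookup P e) * power_diff_quot j i (lookup e j))"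

text \<open>All further properties of \<open>divdiff\<close> follow from this one by cancelling \<open>t\<^sub>j - t\<^sub>i\<close>.\<close>

lemma tvar_diff_mult_divdiff: "(tvar j - tvar i) * divdiff j i P = P - tsubst j i P"
proof -
  have split_exp: "Poly_Mapping.update j 0 e + single j (lookup e j) = e" for e :: "nat \<Rightarrow>\<^sub>0 nat"
    by (rule poly_mapping_eqI) (simp add: lookup_add lookup_update lookup_single when_def)
  have "(tvar j - tvar i) * divdiff j i P = (\<Sum>e\<in>keys P. single (Poly_Mapping.update j 0 e)
      (lookup P e) * ((tvar j - tvar i) * power_diff_quot j i (lookup e j)))"
    by (simp add: divdiff_def sum_distrib_left mult_ac)
  also have "\<dots> = (\<Sum>e\<in>keys P. single (Poly_Mapping.update j 0 e) (lookup P e)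
      * (tvar j ^ lookup e j - tvar i ^ lookup e j))"
    by (simp add: power_diff_quot_def power_diff_sumr2)
  also have "\<dots> = (\<Sum>e\<in>keys P. single e (lookup P e) - single (merge_exp j i e) (lookup P e))"
    by (rule sum.cong) (simp_all add: right_diff_distrib tvar_power mult_single split_exp merge_exp_def)
  also have "\<dots> = P - tsubst j i P"
    by (simp add: sum_subtractf tsubst_def map_monomials_def flip: poly_mapping_eq_sum_single)
  finally show ?thesis .
qed

text \<open>Compare coefficients at \<open>t\<^sub>j e\<close>, where \<open>e\<close> is a monomial of \<open>Q\<close> of maximal degree in \<open>t\<^sub>j\<close>.\<close>

lemma tvar_diff_mult_eq_0:
  assumes ij: "i \<noteq> j" and eq: "(tvar j - tvar i) * Q = (0 :: 'a::comm_ring_1 polyT)"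
  shows "Q = 0"
proof (rule ccontr)
  assume "Q \<noteq> 0"
  then have ne: "keys Q \<noteq> {}" by simp
  define M where "M = Max ((\<lambda>e. lookup e j) ` keys Q)"
  have "M \<in> (\<lambda>e. lookup e j) ` keys Q" unfolding M_def by (rule Max_in) (use ne in auto)
  then obtain e where e: "e \<in> keys Q" "lookup e j = M" by auto
  have max: "lookup e' j \<le> M" if "e' \<in> keys Q" for e'
    unfolding M_def by (rule Max_ge) (use that in auto)
  have lookup_single_mult: "lookup (single a 1 * Q) k = (\<Sum>q. lookup Q q when k = a + q)" for a k
    by (simp add: lookup_mult lookup_single when_mult)
  have j_part: "lookup (tvar j * Q) (single j 1 + e) = lookup Q e"
    by (simp add: tvar_def lookup_single_mult)
  have i_part: "lookup (tvar i * Q) (single j 1 + e) = 0"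
  proof -
    have "(lookup Q q when single j 1 + e = single i 1 + q) = 0" for q
    proof (cases "single j 1 + e = single i 1 + q")
      case True
      then have "lookup (single j 1 + e) j = lookup (single i 1 + q) j" by simp
      then have "lookup q j = Suc (lookup e j)" using ij by (simp add: lookup_add lookup_single when_def)
      then have "q \<notin> keys Q" using max e(2) by fastforce
      then show ?thesis by (simp add: in_keys_iff)
    qed simp
    then show ?thesis by (simp add: tvar_def lookup_single_mult)
  qed
  have "lookup ((tvar j - tvar i) * Q) (single j 1 + e) = lookup Q e"
    using j_part i_part by (simp add: left_diff_distrib lookup_minus)
  then show False using eq e(1) by (simp add: in_keys_iff)
qed

lemma tvar_diff_mult_left_cancel:
  assumes "i \<noteq> j" and "(tvar j - tvar i) * Q1 = (tvar j - tvar i) * (Q2 :: 'a::comm_ring_1 polyT)"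
  shows "Q1 = Q2"
  using tvar_diff_mult_eq_0[of i j "Q1 - Q2"] assms by (simp add: right_diff_distrib)

lemma divdiff_add: "i \<noteq> j \<Longrightarrow> divdiff j i (P + Q) = divdiff j i P + divdiff j i Q"
  by (rule tvar_diff_mult_left_cancel[of i j]) (simp_all add: tvar_diff_mult_divdiff distrib_left tsubst_add)

lemma divdiff_diff: "i \<noteq> j \<Longrightarrow> divdiff j i (P - Q) = divdiff j i P - divdiff j i Q"
  by (rule tvar_diff_mult_left_cancel[of i j])
     (simp_all add: tvar_diff_mult_divdiff right_diff_distrib tsubst_diff)

lemma divdiff_leibniz:
  assumes "i \<noteq> j"
  shows "divdiff j i (P * Q) = divdiff j i P * Q + tsubst j i P * divdiff j i Q"
proof (rule tvar_diff_mult_left_cancel[OF assms])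
  have "(tvar j - tvar i) * (divdiff j i P * Q + tsubst j i P * divdiff j i Q)
      = ((tvar j - tvar i) * divdiff j i P) * Q + tsubst j i P * ((tvar j - tvar i) * divdiff j i Q)"
    by (simp add: algebra_simps)
  also have "\<dots> = (P - tsubst j i P) * Q + tsubst j i P * (Q - tsubst j i Q)"
    by (simp add: tvar_diff_mult_divdiff)
  also have "\<dots> = P * Q - tsubst j i (P * Q)"
    by (simp add: tsubst_mult algebra_simps)
  also have "\<dots> = (tvar j - tvar i) * divdiff j i (P * Q)"
    by (simp add: tvar_diff_mult_divdiff)
  finally show "(tvar j - tvar i) * divdiff j i (P * Q)
      = (tvar j - tvar i) * (divdiff j i P * Q + tsubst j i P * divdiff j i Q)"
    by simp
qed

lemma divdiff_fixed: "i \<noteq> j \<Longrightarrow> tsubst j i P = P \<Longrightarrow> divdiff j i P = 0"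
  by (rule tvar_diff_mult_left_cancel[of i j]) (simp_all add: tvar_diff_mult_divdiff)

lemma divdiff_mult_fixed: "i \<noteq> j \<Longrightarrow> tsubst j i P = P \<Longrightarrow> divdiff j i (P * X) = P * divdiff j i X"
  by (simp add: divdiff_leibniz divdiff_fixed)

lemma divdiff_tvar_same: "i \<noteq> j \<Longrightarrow> divdiff j i (tvar j) = 1"
  by (rule tvar_diff_mult_left_cancel[of i j]) (simp_all add: tvar_diff_mult_divdiff)

lemma tsubst_divdiff_commute:
  assumes "b \<noteq> d" "b \<noteq> c" "a \<noteq> d" "c \<noteq> d"
  shows "tsubst b a (divdiff d c P) = divdiff d c (tsubst b a P)"
proof (rule tvar_diff_mult_left_cancel[of c d])
  show "c \<noteq> d" by fact
  have "(tvar d - tvar c) * tsubst b a (divdiff d c P) = tsubst b a ((tvar d - tvar c) * divdiff d c P)"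
    using assms by (simp add: tsubst_mult tsubst_diff)
  also have "\<dots> = tsubst b a P - tsubst d c (tsubst b a P)"
    using assms by (simp add: tvar_diff_mult_divdiff tsubst_diff tsubst_commute)
  also have "\<dots> = (tvar d - tvar c) * divdiff d c (tsubst b a P)"
    by (simp add: tvar_diff_mult_divdiff)
  finally show "(tvar d - tvar c) * tsubst b a (divdiff d c P) = (tvar d - tvar c) * divdiff d c (tsubst b a P)" .
qed

lemma divdiff_commute_distinct:
  assumes "b \<noteq> d" "b \<noteq> c" "a \<noteq> d" "c \<noteq> d" "a \<noteq> b"
  shows "divdiff b a (divdiff d c P) = divdiff d c (divdiff b a P)"
proof (rule tvar_diff_mult_left_cancel[of a b])
  show "a \<noteq> b" by fact
  have fixed: "tsubst d c (tvar b - tvar a) = tvar b - tvar a"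
    using assms by (simp add: tsubst_diff)
  have "(tvar b - tvar a) * divdiff b a (divdiff d c P) = divdiff d c P - divdiff d c (tsubst b a P)"
    using assms by (simp add: tvar_diff_mult_divdiff tsubst_divdiff_commute)
  also have "\<dots> = divdiff d c ((tvar b - tvar a) * divdiff b a P)"
    using assms by (simp add: tvar_diff_mult_divdiff divdiff_diff)
  also have "\<dots> = (tvar b - tvar a) * divdiff d c (divdiff b a P)"
    by (rule divdiff_mult_fixed) (use assms fixed in auto)
  finally show "(tvar b - tvar a) * divdiff b a (divdiff d c P) = (tvar b - tvar a) * divdiff d c (divdiff b a P)" .
qed

lemma divdiff_diff_divdiff:
  assumes ij: "i \<noteq> j" and jk: "j \<noteq> k" and ik: "i \<noteq> k"
  shows "divdiff k j R - divdiff k i R = (tvar j - tvar i) * divdiff k i (divdiff k j R)"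
proof (rule tvar_diff_mult_left_cancel[of i k])
  show "i \<noteq> k" by fact
  let ?x = "tvar i" and ?y = "tvar j" and ?z = "tvar k"
  define U where "U = divdiff k j R"
  have w: "(?z - ?x) * divdiff k i U = U - tsubst k i U"
    by (rule tvar_diff_mult_divdiff)
  have u: "(?z - ?y) * U = R - tsubst k j R"
    unfolding U_def by (rule tvar_diff_mult_divdiff)
  have v: "tsubst k i R = R - (?z - ?x) * divdiff k i R"
    using tvar_diff_mult_divdiff[of k i R] by simp
  have su: "(?x - ?y) * tsubst k i U = tsubst k i R - tsubst k j R"
  proof -
    have "tsubst k i ((?z - ?y) * U) = tsubst k i (R - tsubst k j R)" using u by simp
    then show ?thesis using assms by (simp add: tsubst_mult tsubst_diff tsubst_tsubst_absorb)
  qed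
  have "(?z - ?x) * ((?y - ?x) * divdiff k i U) = (?y - ?x) * (U - tsubst k i U)"
    by (simp only: w mult.left_commute[of "?z - ?x"])
  also have "\<dots> = (?y - ?x) * U + (tsubst k i R - tsubst k j R)"
    unfolding su[symmetric] by (simp add: algebra_simps)
  also have "\<dots> = (?z - ?x) * U - (?z - ?x) * divdiff k i R"
    using u by (simp add: v algebra_simps)
  finally show "(?z - ?x) * (divdiff k j R - divdiff k i R) = (?z - ?x) * ((?y - ?x) * divdiff k i (divdiff k j R))"
    by (simp add: U_def right_diff_distrib)
qed

lemma divdiff_commute_same:
  assumes "a \<noteq> b" "c \<noteq> b" "a \<noteq> c"
  shows "divdiff b a (divdiff b c P) = divdiff b c (divdiff b a P)"
proof (rule tvar_diff_mult_left_cancel[of a c])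
  show "a \<noteq> c" by fact
  have "(tvar c - tvar a) * divdiff b a (divdiff b c P) = divdiff b c P - divdiff b a P"
    using assms by (simp add: divdiff_diff_divdiff)
  also have "\<dots> = (tvar c - tvar a) * divdiff b c (divdiff b a P)"
    using divdiff_diff_divdiff[of c a b P] assms by (simp add: algebra_simps)
  finally show "(tvar c - tvar a) * divdiff b a (divdiff b c P) = (tvar c - tvar a) * divdiff b c (divdiff b a P)" .
qed

section \<open>The operators of the indeterminates on \<open>\<T>'\<close>\<close>

definition fquad :: "'a::comm_ring_1 \<Rightarrow> 'a \<Rightarrow> 'a polyT \<Rightarrow> 'a polyT" where
  "fquad \<beta> \<alpha> u = u * u + constT \<beta> * u + constT \<alpha>"

definition xop :: "'a::comm_ring_1 \<Rightarrow> 'a \<Rightarrow> nat \<Rightarrow> nat \<Rightarrow> 'a polyT \<Rightarrow> 'a polyT" where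
  "xop \<beta> \<alpha> a b X = tvar a * X + fquad \<beta> \<alpha> (tvar a) * divdiff b a X"

lemma tsubst_fquad: "tsubst j i (fquad \<beta> \<alpha> u) = fquad \<beta> \<alpha> (tsubst j i u)"
  by (simp add: fquad_def tsubst_add tsubst_mult tsubst_constT)

lemma tsubst_fquad_tvar: "c \<noteq> j \<Longrightarrow> tsubst j i (fquad \<beta> \<alpha> (tvar c)) = fquad \<beta> \<alpha> (tvar c)"
  by (simp add: tsubst_fquad)

lemma divdiff_fquad:
  assumes "i \<noteq> j"
  shows "divdiff j i (fquad \<beta> \<alpha> (tvar j)) = tvar i + tvar j + constT \<beta>"
proof (rule tvar_diff_mult_left_cancel[OF assms])
  show "(tvar j - tvar i) * divdiff j i (fquad \<beta> \<alpha> (tvar j)) = (tvar j - tvar i) * (tvar i + tvar j + constT \<beta>)"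
    by (simp only: tvar_diff_mult_divdiff)
       (simp add: fquad_def tsubst_add tsubst_mult tsubst_constT algebra_simps)
qed

lemma xop_commute:
  assumes "a \<noteq> b" "c \<noteq> d" "a \<noteq> d" "c \<noteq> b"
  shows "xop \<beta> \<alpha> a b (xop \<beta> \<alpha> c d X) = xop \<beta> \<alpha> c d (xop \<beta> \<alpha> a b X)"
proof -
  have dd: "divdiff b a (divdiff d c X) = divdiff d c (divdiff b a X)"
  proof (cases "b = d")
    case True
    then show ?thesis using assms by (cases "a = c") (simp_all add: divdiff_commute_same)
  next
    case False
    then show ?thesis using assms by (simp add: divdiff_commute_distinct)
  qed
  let ?f = "fquad \<beta> \<alpha>"
  have expand: "xop \<beta> \<alpha> a b (xop \<beta> \<alpha> c d X) = tvar a * tvar c * X + tvar a * ?f (tvar c) * divdiff d c X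
      + ?f (tvar a) * tvar c * divdiff b a X + ?f (tvar a) * ?f (tvar c) * divdiff b a (divdiff d c X)"
    if "a \<noteq> b" "c \<noteq> d" "a \<noteq> d" "c \<noteq> b" for a b c d
    using that by (simp add: xop_def divdiff_add divdiff_mult_fixed tsubst_fquad_tvar) (simp add: algebra_simps)
  show ?thesis
    using expand[OF assms] expand[of c d a b] assms by (simp add: dd algebra_simps)
qed

text \<open>The operators satisfy the relations generating \<open>\<J>\<close>, with \<open>x\<^sub>i\<^sub>j x\<^sub>j\<^sub>k\<close> acting as
  \<open>xop i j \<circ> xop j k\<close>.\<close>

lemma xop_relation:
  assumes ij: "i \<noteq> j" and jk: "j \<noteq> k" and ik: "i \<noteq> k"
  shows "xop \<beta> \<alpha> i j (xop \<beta> \<alpha> j k R) - xop \<beta> \<alpha> i j (xop \<beta> \<alpha> i k R) - xop \<beta> \<alpha> i k (xop \<beta> \<alpha> j k R)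
         - constT \<beta> * xop \<beta> \<alpha> i k R - constT \<alpha> * R = 0"
proof -
  let ?x = "tvar i :: 'a polyT" and ?y = "tvar j :: 'a polyT"
  let ?f = "fquad \<beta> \<alpha>"
  define U where "U = divdiff k j R"
  define V where "V = divdiff k i R"
  define W where "W = divdiff k i U"
  define A where "A = divdiff j i R"
  define B where "B = divdiff j i U"
  define C where "C = divdiff j i V"
  have U: "U = V + (?y - ?x) * W"
    using divdiff_diff_divdiff[OF assms, of R] by (simp add: U_def V_def W_def algebra_simps)
  have B: "B = C + W"
  proof -
    have "divdiff j i (?y - ?x) = 1"
      using ij by (simp add: divdiff_diff divdiff_tvar_same divdiff_fixed)
    then have "divdiff j i ((?y - ?x) * W) = W"
      using ij by (simp add: divdiff_leibniz tsubst_diff)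
    then show ?thesis using ij by (simp add: B_def C_def U divdiff_add)
  qed
  have xop_jk: "xop \<beta> \<alpha> j k R = ?y * R + ?f ?y * U" by (simp add: xop_def U_def)
  have xop_ik: "xop \<beta> \<alpha> i k R = ?x * R + ?f ?x * V" by (simp add: xop_def V_def)
  have ij_jk: "xop \<beta> \<alpha> i j (xop \<beta> \<alpha> j k R)
      = ?x * (?y * R + ?f ?y * U) + ?f ?x * (R + ?x * A + (?x + ?y + constT \<beta>) * U + ?f ?x * B)"
    unfolding xop_jk using ij
    by (simp add: xop_def divdiff_add divdiff_leibniz divdiff_tvar_same divdiff_fquad tsubst_fquad
        A_def B_def add.assoc)
  have ij_ik: "xop \<beta> \<alpha> i j (xop \<beta> \<alpha> i k R) = ?x * (?x * R + ?f ?x * V) + ?f ?x * (?x * A + ?f ?x * C)"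
    unfolding xop_ik using ij
    by (simp add: xop_def[of _ _ i j] divdiff_add divdiff_mult_fixed tsubst_fquad_tvar A_def C_def)
  have ik_jk: "xop \<beta> \<alpha> i k (xop \<beta> \<alpha> j k R) = ?x * (?y * R + ?f ?y * U) + ?f ?x * (?y * V + ?f ?y * W)"
    unfolding xop_jk using ik jk
    by (simp add: xop_def divdiff_add divdiff_mult_fixed tsubst_fquad_tvar V_def W_def)
  show ?thesis
    unfolding ij_jk ij_ik ik_jk by (simp only: xop_ik U B) (simp add: fquad_def algebra_simps)
qed

definition lin_op :: "('a::comm_ring_1 polyT \<Rightarrow> 'a polyT) \<Rightarrow> bool" where
  "lin_op F \<longleftrightarrow> (\<forall>X Y. F (X + Y) = F X + F Y) \<and> (\<forall>c X. F (constT c * X) = constT c * F X)"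

lemma lin_op_id: "lin_op id"
  by (simp add: lin_op_def)

lemma lin_op_comp: "lin_op F \<Longrightarrow> lin_op G \<Longrightarrow> lin_op (F \<circ> G)"
  by (simp add: lin_op_def)

lemma lin_op_funpow: "lin_op F \<Longrightarrow> lin_op (F ^^ n)"
  by (induction n) (simp_all add: lin_op_id lin_op_comp)

lemma lin_op_constT: "lin_op F \<Longrightarrow> F (constT c * X) = constT c * F X"
  by (simp add: lin_op_def)

lemma lin_op_diff:
  assumes "lin_op F"
  shows "F (X - Y) = F X - F Y"
proof -
  have "F X = F (X - Y) + F Y"
    using assms unfolding lin_op_def by (metis diff_add_cancel)
  then show ?thesis by simp
qed

lemma lin_op_zero: "lin_op F \<Longrightarrow> F 0 = 0"
  using lin_op_diff[of F 0 0] by simp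

lemma lin_op_xop:
  assumes "a \<noteq> b"
  shows "lin_op (xop \<beta> \<alpha> a b)"
  unfolding lin_op_def
proof (intro conjI allI)
  show "xop \<beta> \<alpha> a b (X + Y) = xop \<beta> \<alpha> a b X + xop \<beta> \<alpha> a b Y" for X Y
    using assms by (simp add: xop_def divdiff_add distrib_left)
  show "xop \<beta> \<alpha> a b (constT c * X) = constT c * xop \<beta> \<alpha> a b X" for c X
    using assms by (simp add: xop_def divdiff_mult_fixed tsubst_constT distrib_left mult.left_commute)
qed

definition commute :: "('b \<Rightarrow> 'b) \<Rightarrow> ('b \<Rightarrow> 'b) \<Rightarrow> bool" where
  "commute f g \<longleftrightarrow> (\<forall>X. f (g X) = g (f X))"

lemma commute_self: "commute f f"
  by (simp add: commute_def)

lemma commute_funpow: "commute f g \<Longrightarrow> commute f (g ^^ n)"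
  by (induction n) (simp_all add: commute_def)

lemma commute_xop:
  "a \<noteq> b \<Longrightarrow> c \<noteq> d \<Longrightarrow> a \<noteq> d \<Longrightarrow> c \<noteq> b \<Longrightarrow> commute (xop \<beta> \<alpha> a b) (xop \<beta> \<alpha> c d)"
  unfolding commute_def by (blast intro: xop_commute)

fun comp_list :: "('b \<Rightarrow> 'b) list \<Rightarrow> 'b \<Rightarrow> 'b" where
  "comp_list [] x = x"
| "comp_list (f # fs) x = f (comp_list fs x)"

lemma comp_list_append: "comp_list (fs @ gs) x = comp_list fs (comp_list gs x)"
  by (induction fs) simp_all

lemma lin_op_comp_list: "(\<And>f. f \<in> set fs \<Longrightarrow> lin_op f) \<Longrightarrow> lin_op (comp_list fs)"
  by (induction fs) (auto simp: lin_op_def)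

lemma commute_comp_list: "(\<And>g. g \<in> set fs \<Longrightarrow> commute f g) \<Longrightarrow> commute f (comp_list fs)"
  by (induction fs) (auto simp: commute_def)

lemma comp_list_funpow_Suc:
  assumes "a \<in> set xs" "distinct xs" "\<And>s. s \<in> set xs \<Longrightarrow> commute (g a) (g s)"
  shows "comp_list (map (\<lambda>s. g s ^^ (e(a := Suc (e a))) s) xs) x
       = g a (comp_list (map (\<lambda>s. g s ^^ e s) xs) x)"
  using assms
proof (induction xs arbitrary: x)
  case Nil
  then show ?case by simp
next
  case (Cons y xs)
  show ?case
  proof (cases "y = a")
    case True
    with Cons.prems have "a \<notin> set xs" by simp
    then have "map (\<lambda>s. g s ^^ (e(a := Suc (e a))) s) xs = map (\<lambda>s. g s ^^ e s) xs"
      by (auto intro: map_cong)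
    with True show ?thesis by (simp only: list.map comp_list.simps) simp
  next
    case False
    with Cons.prems have "commute (g a) (g y ^^ e y)"
      by (simp add: commute_funpow)
    with False Cons.prems Cons.IH show ?thesis by (simp add: commute_def)
  qed
qed

section \<open>The linear map \<open>L\<close>\<close>

definition column_op :: "'a::comm_ring_1 \<Rightarrow> 'a \<Rightarrow> monoX \<Rightarrow> nat \<Rightarrow> 'a polyT \<Rightarrow> 'a polyT" where
  "column_op \<beta> \<alpha> m l = comp_list (map (\<lambda>s. xop \<beta> \<alpha> s l ^^ lookup m (s, l)) [1..<l])"

definition columns_op :: "'a::comm_ring_1 \<Rightarrow> 'a \<Rightarrow> monoX \<Rightarrow> nat list \<Rightarrow> 'a polyT \<Rightarrow> 'a polyT" where
  "columns_op \<beta> \<alpha> m ls = comp_list (map (column_op \<beta> \<alpha> m) ls)"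

definition Lmono :: "'a::comm_ring_1 \<Rightarrow> 'a \<Rightarrow> nat \<Rightarrow> monoX \<Rightarrow> 'a polyT" where
  "Lmono \<beta> \<alpha> n m = columns_op \<beta> \<alpha> m [1..<Suc n] 1"

lemma lin_op_column_op: "lin_op (column_op \<beta> \<alpha> m l)"
  unfolding column_op_def by (rule lin_op_comp_list) (auto intro!: lin_op_funpow lin_op_xop)

lemma lin_op_columns_op: "lin_op (columns_op \<beta> \<alpha> m ls)"
  unfolding columns_op_def by (rule lin_op_comp_list) (auto intro: lin_op_column_op)

lemma commute_xop_column_op:
  assumes "a < b" "b \<noteq> l" "a \<noteq> l" "l \<le> b"
  shows "commute (xop \<beta> \<alpha> a b) (column_op \<beta> \<alpha> m l)"
  unfolding column_op_def
  by (rule commute_comp_list) (use assms in \<open>auto intro!: commute_funpow commute_xop\<close>)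

lemma commute_xop_column_op_same:
  assumes "a < b"
  shows "commute (xop \<beta> \<alpha> a b) (column_op \<beta> \<alpha> m b)"
  unfolding column_op_def
proof (rule commute_comp_list)
  fix g assume "g \<in> set (map (\<lambda>s. xop \<beta> \<alpha> s b ^^ lookup m (s, b)) [1..<b])"
  then obtain s where "s < b" "g = xop \<beta> \<alpha> s b ^^ lookup m (s, b)" by auto
  with assms show "commute (xop \<beta> \<alpha> a b) g"
    by (cases "s = a") (auto intro!: commute_funpow commute_xop simp: commute_self)
qed

lemma commute_xop_columns_op:
  assumes "a < b" "\<And>l. l \<in> set ls \<Longrightarrow> a \<noteq> l \<and> b \<noteq> l \<and> l \<le> b"
  shows "commute (xop \<beta> \<alpha> a b) (columns_op \<beta> \<alpha> m ls)"
  unfolding columns_op_def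
  by (rule commute_comp_list) (use assms in \<open>auto intro: commute_xop_column_op\<close>)

lemma column_op_add_other:
  "b \<noteq> l \<Longrightarrow> column_op \<beta> \<alpha> (m + single (a, b) 1) l = column_op \<beta> \<alpha> m l"
  unfolding column_op_def by (simp add: lookup_add lookup_single)

lemma columns_op_add_other:
  "b \<notin> set ls \<Longrightarrow> columns_op \<beta> \<alpha> (m + single (a, b) 1) ls = columns_op \<beta> \<alpha> m ls"
  unfolding columns_op_def
  by (intro arg_cong[where f = comp_list] map_cong refl) (metis column_op_add_other)

lemma column_op_add_same:
  assumes "1 \<le> a" "a < b"
  shows "column_op \<beta> \<alpha> (m + single (a, b) 1) b X = column_op \<beta> \<alpha> m b (xop \<beta> \<alpha> a b X)"
proof -
  let ?e = "\<lambda>s. lookup m (s, b)"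
  have "lookup (m + single (a, b) 1) (s, b) = (?e(a := Suc (?e a))) s" for s
    by (simp add: lookup_add lookup_single when_def)
  then have "column_op \<beta> \<alpha> (m + single (a, b) 1) b X
      = comp_list (map (\<lambda>s. xop \<beta> \<alpha> s b ^^ (?e(a := Suc (?e a))) s) [1..<b]) X"
    by (simp add: column_op_def)
  also have "\<dots> = xop \<beta> \<alpha> a b (column_op \<beta> \<alpha> m b X)"
    unfolding column_op_def
  proof (rule comp_list_funpow_Suc)
    fix s assume "s \<in> set [1..<b]"
    with assms show "commute (xop \<beta> \<alpha> a b) (xop \<beta> \<alpha> s b)"
      by (cases "s = a") (auto intro: commute_xop simp: commute_self)
  qed (use assms in simp_all)
  also have "\<dots> = column_op \<beta> \<alpha> m b (xop \<beta> \<alpha> a b X)"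
    using commute_xop_column_op_same[OF assms(2), of \<beta> \<alpha> m] by (simp add: commute_def)
  finally show ?thesis .
qed

lemma columns_op_Cons: "columns_op \<beta> \<alpha> m (l # ls) X = column_op \<beta> \<alpha> m l (columns_op \<beta> \<alpha> m ls X)"
  by (simp add: columns_op_def)

lemma columns_op_append: "columns_op \<beta> \<alpha> m (ls @ ls') X = columns_op \<beta> \<alpha> m ls (columns_op \<beta> \<alpha> m ls' X)"
  by (simp add: columns_op_def comp_list_append)

lemma Lmono_split:
  assumes "1 \<le> j" "j < k" "k \<le> n"
  shows "Lmono \<beta> \<alpha> n m = columns_op \<beta> \<alpha> m [1..<j] (column_op \<beta> \<alpha> m j (columns_op \<beta> \<alpha> m [Suc j..<k]
            (column_op \<beta> \<alpha> m k (columns_op \<beta> \<alpha> m [Suc k..<Suc n] 1))))"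
proof -
  have "[1..<Suc n] = [1..<j] @ j # [Suc j..<k] @ k # [Suc k..<Suc n]"
    using assms upt_add_eq_append[of 1 j "Suc n - j"] upt_add_eq_append[of "Suc j" k "Suc n - k"]
    by (simp add: upt_conv_Cons)
  then show ?thesis by (simp add: Lmono_def columns_op_append columns_op_Cons)
qed

text \<open>Split \<open>L m = T R\<close> at column \<open>j\<close>.  Multiplying \<open>m\<close> by \<open>x\<^sub>a\<^sub>k\<close> (\<open>a \<in> {i, j}\<close>) turns \<open>R\<close> into
  \<open>xop a k R\<close>, since \<open>xop a k\<close> commutes with the columns between \<open>j\<close> and \<open>k\<close>; multiplying it by
  \<open>x\<^sub>i\<^sub>j\<close> applies \<open>xop i j\<close> to the argument of \<open>T\<close>.\<close>

lemma Lmono_relation: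
  assumes ij: "1 \<le> i" "i < j" and jk: "j < k" and kn: "k \<le> n"
  shows "Lmono \<beta> \<alpha> n (m + single (i, j) 1 + single (j, k) 1) - Lmono \<beta> \<alpha> n (m + single (i, k) 1 + single (i, j) 1)
       - Lmono \<beta> \<alpha> n (m + single (i, k) 1 + single (j, k) 1) - constT \<beta> * Lmono \<beta> \<alpha> n (m + single (i, k) 1)
       - constT \<alpha> * Lmono \<beta> \<alpha> n m = 0" (is "?lhs = 0")
proof -
  define T where "T = (\<lambda>X. columns_op \<beta> \<alpha> m [1..<j] (column_op \<beta> \<alpha> m j X))"
  define V where "V = columns_op \<beta> \<alpha> m [Suc j..<k]"
  define R where "R = V (column_op \<beta> \<alpha> m k (columns_op \<beta> \<alpha> m [Suc k..<Suc n] 1))"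
  have lin_T: "lin_op T"
    using lin_op_comp[OF lin_op_columns_op lin_op_column_op] by (simp add: T_def comp_def)
  have V_xop: "V (xop \<beta> \<alpha> a k Y) = xop \<beta> \<alpha> a k (V Y)" if "a \<in> {i, j}" for a Y
    using commute_xop_columns_op[of a k "[Suc j..<k]" \<beta> \<alpha> m] that ij jk
    by (auto simp: V_def commute_def)
  have column_xop: "column_op \<beta> \<alpha> m k (xop \<beta> \<alpha> a k Y) = xop \<beta> \<alpha> a k (column_op \<beta> \<alpha> m k Y)"
    if "a \<in> {i, j}" for a Y
    using commute_xop_column_op_same[of a k \<beta> \<alpha> m] that ij jk by (auto simp: commute_def)
  have split: "Lmono \<beta> \<alpha> n m' = columns_op \<beta> \<alpha> m' [1..<j] (column_op \<beta> \<alpha> m' j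
      (columns_op \<beta> \<alpha> m' [Suc j..<k] (column_op \<beta> \<alpha> m' k (columns_op \<beta> \<alpha> m' [Suc k..<Suc n] 1))))" for m'
    by (rule Lmono_split) (use ij jk kn in auto)
  have "j \<notin> set [1..<j]" "k \<notin> set [1..<j]" "j \<notin> set [Suc j..<k]" "k \<notin> set [Suc j..<k]"
     "j \<notin> set [Suc k..<Suc n]" "k \<notin> set [Suc k..<Suc n]" "k \<noteq> j" "j \<noteq> k"
    using jk by auto
  note other = this(1-6)[THEN columns_op_add_other] this(7,8)[THEN column_op_add_other]
  have same: "column_op \<beta> \<alpha> (m' + single (i, j) 1) j X = column_op \<beta> \<alpha> m' j (xop \<beta> \<alpha> i j X)"
      "column_op \<beta> \<alpha> (m' + single (i, k) 1) k X = column_op \<beta> \<alpha> m' k (xop \<beta> \<alpha> i k X)"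
      "column_op \<beta> \<alpha> (m' + single (j, k) 1) k X = column_op \<beta> \<alpha> m' k (xop \<beta> \<alpha> j k X)" for m' X
    using ij jk by - (rule column_op_add_same, simp, simp)+
  note unfold = split T_def R_def other same column_xop V_xop insertI1 insertI2 singletonI V_def[symmetric]
  have "Lmono \<beta> \<alpha> n (m + single (i, j) 1 + single (j, k) 1) = T (xop \<beta> \<alpha> i j (xop \<beta> \<alpha> j k R))"
    "Lmono \<beta> \<alpha> n (m + single (i, k) 1 + single (i, j) 1) = T (xop \<beta> \<alpha> i j (xop \<beta> \<alpha> i k R))"
    "Lmono \<beta> \<alpha> n (m + single (i, k) 1 + single (j, k) 1) = T (xop \<beta> \<alpha> i k (xop \<beta> \<alpha> j k R))"
    "Lmono \<beta> \<alpha> n (m + single (i, k) 1) = T (xop \<beta> \<alpha> i k R)"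
    "Lmono \<beta> \<alpha> n m = T R"
    by (simp only: unfold)+
  then have "?lhs = T (xop \<beta> \<alpha> i j (xop \<beta> \<alpha> j k R) - xop \<beta> \<alpha> i j (xop \<beta> \<alpha> i k R)
      - xop \<beta> \<alpha> i k (xop \<beta> \<alpha> j k R) - constT \<beta> * xop \<beta> \<alpha> i k R - constT \<alpha> * R)"
    using lin_T by (simp only: lin_op_diff lin_op_constT)
  also have "\<dots> = 0"
    using xop_relation[of i j k \<beta> \<alpha> R] ij jk lin_T by (simp add: lin_op_zero)
  finally show ?thesis .
qed

section \<open>\<open>L\<close> vanishes on \<open>\<J>\<close>\<close>

definition linear_extension :: "(monoX \<Rightarrow> 'a polyT) \<Rightarrow> 'a::comm_ring_1 polyX \<Rightarrow> 'a polyT" where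
  "linear_extension f P = (\<Sum>e\<in>keys P. constT (lookup P e) * f e)"

lemma linear_extension_superset:
  assumes "finite K" "keys P \<subseteq> K"
  shows "linear_extension f P = (\<Sum>e\<in>K. constT (lookup P e) * f e)"
  unfolding linear_extension_def
  by (rule sum.mono_neutral_left) (use assms in \<open>auto simp: in_keys_iff constT_0\<close>)

lemma linear_extension_add: "linear_extension f (P + Q) = linear_extension f P + linear_extension f Q"
proof -
  let ?K = "keys P \<union> keys Q"
  have "linear_extension f (P + Q) = (\<Sum>e\<in>?K. constT (lookup (P + Q) e) * f e)"
    by (rule linear_extension_superset) (auto simp: keys_add)
  also have "\<dots> = (\<Sum>e\<in>?K. constT (lookup P e) * f e) + (\<Sum>e\<in>?K. constT (lookup Q e) * f e)"
    by (simp add: lookup_add constT_add sum.distrib distrib_right)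
  also have "\<dots> = linear_extension f P + linear_extension f Q"
    by (subst (1 2) linear_extension_superset[where K = ?K]) auto
  finally show ?thesis .
qed

lemma linear_extension_single: "linear_extension f (single e c) = constT c * f e"
  by (simp add: linear_extension_def constT_0)

lemma linear_extension_zero [simp]: "linear_extension f 0 = 0"
  by (simp add: linear_extension_def)

lemma linear_extension_sum: "linear_extension f (sum F A) = (\<Sum>x\<in>A. linear_extension f (F x))"
  by (induction A rule: infinite_finite_induct) (auto simp: linear_extension_add)

lemma linear_extension_diff: "linear_extension f (P - Q) = linear_extension f P - linear_extension f Q"
  using linear_extension_add[of f "P - Q" Q] by simp

lemma single_mult_genJ:
  "single m c * genJ \<beta> \<alpha> (i, j, k) =
     single (m + single (i, j) 1 + single (j, k) 1) c - single (m + single (i, k) 1 + single (i, j) 1) c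
     - single (m + single (i, k) 1 + single (j, k) 1) c - single (m + single (i, k) 1) (c * \<beta>)
     - single m (c * \<alpha>)"
  by (simp add: genJ_def xvar_def constX_def algebra_simps mult_single add.assoc)

lemma linear_extension_Lmono_mult_genJ_eq_0:
  assumes "t \<in> triples n"
  shows "linear_extension (Lmono \<beta> \<alpha> n) (Q * genJ \<beta> \<alpha> t) = 0"
proof -
  obtain i j k where t: "t = (i, j, k)" "1 \<le> i" "i < j" "j < k" "k \<le> n"
    using assms by (auto simp: triples_def)
  have "linear_extension (Lmono \<beta> \<alpha> n) (single m c * genJ \<beta> \<alpha> t) = 0" for m c
  proof -
    have "linear_extension (Lmono \<beta> \<alpha> n) (single m c * genJ \<beta> \<alpha> t)
      = constT c * (Lmono \<beta> \<alpha> n (m + single (i, j) 1 + single (j, k) 1)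
         - Lmono \<beta> \<alpha> n (m + single (i, k) 1 + single (i, j) 1)
         - Lmono \<beta> \<alpha> n (m + single (i, k) 1 + single (j, k) 1)
         - constT \<beta> * Lmono \<beta> \<alpha> n (m + single (i, k) 1) - constT \<alpha> * Lmono \<beta> \<alpha> n m)"
      unfolding t single_mult_genJ
      by (simp only: linear_extension_diff linear_extension_single constT_mult) (simp add: algebra_simps)
    then show ?thesis using Lmono_relation[OF t(2-5), of \<beta> \<alpha> m] by simp
  qed
  moreover have "Q * genJ \<beta> \<alpha> t = (\<Sum>e\<in>keys Q. single e (lookup Q e) * genJ \<beta> \<alpha> t)"
    by (subst poly_mapping_eq_sum_single) (simp add: sum_distrib_right)
  ultimately show ?thesis by (simp add: linear_extension_sum)
qed

lemma linear_extension_Lmono_idealJ_eq_0: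
  "P \<in> idealJ n \<beta> \<alpha> \<Longrightarrow> linear_extension (Lmono \<beta> \<alpha> n) P = 0"
  by (auto simp: idealJ_def linear_extension_sum linear_extension_Lmono_mult_genJ_eq_0)

section \<open>\<open>L\<close> agrees with \<open>D\<close> on pathless polynomials\<close>

definition tvar_free :: "nat \<Rightarrow> 'a::comm_ring_1 polyT \<Rightarrow> bool" where
  "tvar_free l P \<longleftrightarrow> (\<forall>s. tsubst l s P = P)"

lemma tvar_free_mult: "tvar_free l P \<Longrightarrow> tvar_free l Q \<Longrightarrow> tvar_free l (P * Q)"
  by (simp add: tvar_free_def tsubst_mult)

lemma tvar_free_tvar_power: "s \<noteq> l \<or> c = 0 \<Longrightarrow> tvar_free l (tvar s ^ c)"
  by (auto simp: tvar_free_def tsubst_power tsubst_one)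

lemma tvar_free_prod: "(\<And>x. x \<in> A \<Longrightarrow> tvar_free l (F x)) \<Longrightarrow> tvar_free l (prod F A)"
  by (simp add: tvar_free_def tsubst_prod)

lemma xop_funpow_tvar_free:
  assumes "s \<noteq> l" "tvar_free l P"
  shows "(xop \<beta> \<alpha> s l ^^ c) P = tvar s ^ c * P"
proof (induction c)
  case (Suc c)
  have "tvar_free l (tvar s ^ c * P)"
    using assms by (simp add: tvar_free_mult tvar_free_tvar_power)
  then show ?case
    using Suc assms by (simp add: xop_def divdiff_fixed tvar_free_def mult.assoc)
qed simp

lemma column_op_tvar_free:
  assumes "tvar_free l P"
  shows "column_op \<beta> \<alpha> m l P = (\<Prod>s\<in>{1..<l}. tvar s ^ lookup m (s, l)) * P"
proof -
  have "comp_list (map (\<lambda>s. xop \<beta> \<alpha> s l ^^ lookup m (s, l)) xs) P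
      = (\<Prod>s\<in>set xs. tvar s ^ lookup m (s, l)) * P" if "distinct xs" "l \<notin> set xs" for xs
    using that
  proof (induction xs)
    case (Cons s xs)
    have "tvar_free l ((\<Prod>s\<in>set xs. tvar s ^ lookup m (s, l)) * P)"
      using Cons.prems assms by (auto intro!: tvar_free_mult tvar_free_prod tvar_free_tvar_power)
    then show ?case using Cons by (simp add: xop_funpow_tvar_free mult.assoc)
  qed simp
  then show ?thesis by (simp add: column_op_def)
qed

lemma column_op_empty_column:
  assumes "\<forall>s\<in>{1..<l}. lookup m (s, l) = 0"
  shows "column_op \<beta> \<alpha> m l P = P"
proof -
  have "comp_list (map (\<lambda>s. xop \<beta> \<alpha> s l ^^ lookup m (s, l)) xs) P = P"
    if "\<forall>s\<in>set xs. lookup m (s, l) = 0" for xs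
    using that by (induction xs) simp_all
  then show ?thesis using assms by (simp add: column_op_def)
qed

definition Dcolumns :: "nat \<Rightarrow> monoX \<Rightarrow> nat \<Rightarrow> 'a::comm_ring_1 polyT" where
  "Dcolumns n m l = (\<Prod>l'\<in>{l..n}. \<Prod>s\<in>{1..<l'}. tvar s ^ lookup m (s, l'))"

lemma columns_op_pathless:
  assumes pl: "pathless_mono n m" and l: "1 \<le> l" "l \<le> Suc n"
  shows "columns_op \<beta> \<alpha> m [l..<Suc n] 1 = (Dcolumns n m l :: 'a::comm_ring_1 polyT)"
  using l
proof (induction "Suc n - l" arbitrary: l)
  case 0
  then show ?case by (simp add: columns_op_def Dcolumns_def)
next
  case (Suc d)
  then have ln: "l \<le> n" by simp
  let ?col = "\<Prod>s\<in>{1..<l}. tvar s ^ lookup m (s, l)"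
  have later: "columns_op \<beta> \<alpha> m [Suc l..<Suc n] 1 = (Dcolumns n m (Suc l) :: 'a polyT)"
    using Suc ln by simp
  have "column_op \<beta> \<alpha> m l (Dcolumns n m (Suc l)) = ?col * (Dcolumns n m (Suc l) :: 'a polyT)"
  proof (cases "\<forall>s\<in>{1..<l}. lookup m (s, l) = 0")
    case True
    then show ?thesis using column_op_empty_column by simp
  next
    case False
    then obtain s0 where s0: "1 \<le> s0" "s0 < l" "lookup m (s0, l) \<noteq> 0" by auto
    have "lookup m (l, l') = 0" if "l < l'" "l' \<le> n" for l'
      using pl s0 that unfolding pathless_mono_def by force
    then have "tvar_free l (tvar s ^ lookup m (s, l') :: 'a polyT)" if "l < l'" "l' \<le> n" for s l'
      using that by (auto intro: tvar_free_tvar_power)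
    then have "tvar_free l (Dcolumns n m (Suc l) :: 'a polyT)"
      unfolding Dcolumns_def by (auto intro!: tvar_free_prod)
    then show ?thesis by (rule column_op_tvar_free)
  qed
  moreover have "Dcolumns n m l = ?col * (Dcolumns n m (Suc l) :: 'a polyT)"
    unfolding Dcolumns_def using ln by (simp add: prod.atLeast_Suc_atMost)
  moreover have "[l..<Suc n] = l # [Suc l..<Suc n]"
    using ln by (simp add: upt_conv_Cons)
  ultimately show ?case
    by (simp only: columns_op_Cons later)
qed

lemma Lmono_pathless:
  assumes "pathless_mono n m" and "keys m \<subseteq> varsX n"
  shows "Lmono \<beta> \<alpha> n m = (\<Prod>v\<in>keys m. tvar (fst v) ^ lookup m v :: 'a::comm_ring_1 polyT)"
proof -
  have "Lmono \<beta> \<alpha> n m = (Dcolumns n m 1 :: 'a polyT)"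
    unfolding Lmono_def using assms(1) by (rule columns_op_pathless) auto
  also have "\<dots> = (\<Prod>(l, s)\<in>(SIGMA l:{1..n}. {1..<l}). tvar s ^ lookup m (s, l))"
    unfolding Dcolumns_def by (rule prod.Sigma) auto
  also have "\<dots> = (\<Prod>v\<in>varsX n. tvar (fst v) ^ lookup m v)"
    by (rule prod.reindex_bij_witness[of _ prod.swap prod.swap]) (auto simp: varsX_def)
  also have "\<dots> = (\<Prod>v\<in>keys m. tvar (fst v) ^ lookup m v)"
  proof (rule prod.mono_neutral_right)
    show "finite (varsX n)"
      by (rule finite_subset[of _ "{1..n} \<times> {1..n}"]) (auto simp: varsX_def)
  qed (use assms(2) in \<open>auto simp: in_keys_iff\<close>)
  finally show ?thesis .
qed

lemma D_eq_linear_extension_Lmono: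
  assumes "inX n q" "pathless n q"
  shows "D q = linear_extension (Lmono \<beta> \<alpha> n) q"
  unfolding linear_extension_def D_def constT_def
  using assms by (intro sum.cong refl) (simp add: Lmono_pathless inX_def pathless_def)

theorem theorem2p7:
  fixes \<alpha> \<beta> :: "'a::comm_ring_1" and n :: nat and p q1 q2 :: "'a polyX"
  assumes "n \<ge> 1"
    and "inX n p" and "inX n q1" and "inX n q2"
    and "pathless n q1" and "pathless n q2"
    and "p - q1 \<in> idealJ n \<beta> \<alpha>" and "p - q2 \<in> idealJ n \<beta> \<alpha>"
  shows "D q1 = D q2"
proof -
  let ?L = "linear_extension (Lmono \<beta> \<alpha> n)"
  have "?L (p - q1) = 0" "?L (p - q2) = 0"
    using assms(7,8) by (simp_all add: linear_extension_Lmono_idealJ_eq_0)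
  then have "?L q1 = ?L q2"
    by (simp add: linear_extension_diff)
  then show ?thesis
    using assms(3-6) by (simp add: D_eq_linear_extension_Lmono[where \<beta> = \<beta> and \<alpha> = \<alpha>])
qed

end
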